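(* Let $G$ be a connected simple graph on $n\ge2$ vertices labeled so that $m_1\ge m_2\ge\cdots\ge m_n$, where $m_i=\frac{\sum_{j\sim i}d_j}{d_i}$. Let $N=\max_{i\sim j}d_j/d_i$. Then for $1\le i\le n$, \[\rho(A(G))\le \frac{m_i-N+\sqrt{(m_i+N)^2+4N\sum_{k=1}^{i-1}(m_k-m_i)}}{2},\] and equality holds if and only if $m_1=m_2=\cdots=m_n$ (i.e., $G$ is pseudo-regular).
   Context: $A(G)$ is the adjacency matrix of $G$, $d_i$ the degree of vertex $v_i$, $i\sim j$ means $v_i$ and $v_j$ are adjacent, $m_i$ is the average degree of $v_i$, and $\rho$ is the spectral radius. A graph is pseudo-regular if all $m_i$ are equal. An empty sum equals $0$. *)

theory Defs
  imports Complex_Main "Jordan_Normal_Form.Spectral_Radius"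
begin

definition simple_graph :: "nat \<Rightarrow> (nat \<Rightarrow> nat \<Rightarrow> bool) \<Rightarrow> bool" where
  "simple_graph n E \<longleftrightarrow> (\<forall>i j. E i j \<longrightarrow> i < n \<and> j < n) \<and>
     (\<forall>i j. E i j \<longrightarrow> E j i) \<and> (\<forall>i. \<not> E i i)"

definition connected_graph :: "nat \<Rightarrow> (nat \<Rightarrow> nat \<Rightarrow> bool) \<Rightarrow> bool" where
  "connected_graph n E \<longleftrightarrow> (\<forall>i<n. \<forall>j<n. E\<^sup>*\<^sup>* i j)"

definition gdegree :: "nat \<Rightarrow> (nat \<Rightarrow> nat \<Rightarrow> bool) \<Rightarrow> nat \<Rightarrow> nat" where
  "gdegree n E i = card {j. j < n \<and> E i j}"

definition avg_degree :: "nat \<Rightarrow> (nat \<Rightarrow> nat \<Rightarrow> bool) \<Rightarrow> nat \<Rightarrow> real" where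
  "avg_degree n E i = (\<Sum>j | j < n \<and> E i j. real (gdegree n E j)) / real (gdegree n E i)"

definition adj_matrix :: "nat \<Rightarrow> (nat \<Rightarrow> nat \<Rightarrow> bool) \<Rightarrow> complex mat" where
  "adj_matrix n E = mat n n (\<lambda>(i, j). if E i j then 1 else 0)"

definition max_deg_ratio :: "nat \<Rightarrow> (nat \<Rightarrow> nat \<Rightarrow> bool) \<Rightarrow> real" where
  "max_deg_ratio n E = Max {real (gdegree n E j) / real (gdegree n E i) | i j. i < n \<and> j < n \<and> E i j}"

end

theory Submission
  imports Defs
begin

(* Fix a vertex l and let phi be the claimed bound; phi is the larger root of
   (x + N) (x - m_l) = N * sum_{k<l} (m_k - m_l).  The proof exhibits a positive
   weight vector w_k = d_k (1 + c_k), with c_k = (m_k - m_l) / (phi + N) for k < l and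
   c_k = 0 otherwise, satisfying A w <= phi w row by row.  The gap phi w_i - (A w)_i
   splits into three visibly nonnegative terms (a slack term, a sum over the
   non-neighbours of i, and a sum weighted by the degree ratios N d_i - d_j).

   A Collatz-Wielandt comparison (first part of the file) turns A w <= phi w into
   rho(A) <= phi: apply it to the moduli of a Perron eigenvector.  If the graph is not
   pseudo-regular, one of the three gap terms is strictly positive in some row, and
   connectivity propagates tightness to give rho(A) < phi.  If the graph is pseudo-regular,
   phi = m_l and the degree vector is an eigenvector for m_l, so rho(A) = phi. *)

lemma max_ratio_vertex:
  fixes w y :: "nat \<Rightarrow> real"
  assumes w_pos: "\<forall>i<n. w i > 0" and y_nonneg: "\<forall>i<n. y i \<ge> 0"
    and p0: "p0 < n" "y p0 > 0"
  obtains t p where "t > 0" "p < n" "\<forall>i<n. y i \<le> t * w i" "y p = t * w p"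
proof -
  define f where "f i = y i / w i" for i
  obtain p where p: "p < n" "f p = Max (f ` {..<n})"
    using Max_in[of "f ` {..<n}"] p0(1) by fastforce
  have f_le: "f i \<le> f p" if "i < n" for i
    using p(2) that by simp
  have "f p > 0"
    using f_le[OF p0(1)] p0 w_pos unfolding f_def by (smt (verit) divide_pos_pos)
  moreover have "y i \<le> f p * w i" if "i < n" for i
    using f_le[OF that] w_pos that unfolding f_def by (auto simp: field_simps)
  moreover have "y p = f p * w p"
    using w_pos p(1) unfolding f_def by auto
  ultimately show thesis using that p(1) by blast
qed

lemma tight_vertex_propagates:
  fixes w y :: "nat \<Rightarrow> real"
  assumes super: "\<forall>i<n. (\<Sum>j | j<n \<and> E i j. w j) \<le> \<phi> * w i"
    and sub: "\<forall>i<n. \<phi> * y i \<le> (\<Sum>j | j<n \<and> E i j. y j)"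
    and dominated: "\<forall>i<n. y i \<le> t * w i" and t: "t > 0"
    and a: "a < n" "y a = t * w a" and edge: "E a b" "b < n"
  shows "y b = t * w b"
proof -
  let ?gap = "\<lambda>j. t * w j - y j"
  have gap_nonneg: "\<forall>j\<in>{j. j<n \<and> E a j}. ?gap j \<ge> 0"
    using dominated by auto
  have "(\<Sum>j | j<n \<and> E a j. ?gap j)
        = t * (\<Sum>j | j<n \<and> E a j. w j) - (\<Sum>j | j<n \<and> E a j. y j)"
    by (simp add: sum_subtractf sum_distrib_left)
  also have "\<dots> \<le> t * (\<phi> * w a) - \<phi> * y a"
  proof -
    have "t * (\<Sum>j | j<n \<and> E a j. w j) \<le> t * (\<phi> * w a)"
      using super a(1) t by (simp add: mult_left_mono)
    then show ?thesis
      using sub[rule_format, OF a(1)] by linarith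
  qed
  also have "\<dots> = 0"
    using a(2) by simp
  finally have "(\<Sum>j | j<n \<and> E a j. ?gap j) = 0"
    using sum_nonneg[of _ ?gap] gap_nonneg by (meson order_antisym)
  then have "\<forall>j\<in>{j. j<n \<and> E a j}. ?gap j = 0"
    using gap_nonneg by (subst (asm) sum_nonneg_eq_0_iff) auto
  then show ?thesis
    using edge by auto
qed

(* Collatz-Wielandt comparison: a positive super-solution A w <= phi w bounds every r
   admitting a nonnegative, nonzero sub-solution r y <= A y.  The vertex maximising
   y_i / w_i gives the bound. *)
lemma subinvariant_le_superinvariant:
  fixes w y :: "nat \<Rightarrow> real"
  assumes w_pos: "\<forall>i<n. w i > 0"
    and super: "\<forall>i<n. (\<Sum>j | j<n \<and> E i j. w j) \<le> \<phi> * w i"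
    and y_nonneg: "\<forall>i<n. y i \<ge> 0" and p0: "p0 < n" "y p0 > 0"
    and sub: "\<forall>i<n. r * y i \<le> (\<Sum>j | j<n \<and> E i j. y j)"
  shows "r \<le> \<phi>"
proof -
  obtain t p where t: "t > 0" and p: "p < n"
    and dominated: "\<forall>i<n. y i \<le> t * w i" and tight: "y p = t * w p"
    using max_ratio_vertex[OF w_pos y_nonneg p0] .
  have "r * y p \<le> (\<Sum>j | j<n \<and> E p j. y j)"
    using sub p by blast
  also have "\<dots> \<le> (\<Sum>j | j<n \<and> E p j. t * w j)"
    using dominated by (intro sum_mono) auto
  also have "\<dots> = t * (\<Sum>j | j<n \<and> E p j. w j)"
    by (simp add: sum_distrib_left)
  also have "\<dots> \<le> t * (\<phi> * w p)"
    using super p t by (simp add: mult_left_mono)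
  also have "\<dots> = \<phi> * y p"
    using tight by simp
  finally have "r * y p \<le> \<phi> * y p" .
  moreover have "y p > 0"
    using tight t w_pos p by simp
  ultimately show ?thesis
    by simp
qed

(* Strict version: on a connected graph a single strict row of A w <= phi w forces r < phi,
   since r = phi would make y a multiple of w everywhere. *)
lemma subinvariant_lt_superinvariant:
  fixes w y :: "nat \<Rightarrow> real"
  assumes w_pos: "\<forall>i<n. w i > 0"
    and super: "\<forall>i<n. (\<Sum>j | j<n \<and> E i j. w j) \<le> \<phi> * w i"
    and y_nonneg: "\<forall>i<n. y i \<ge> 0" and p0: "p0 < n" "y p0 > 0"
    and sub: "\<forall>i<n. r * y i \<le> (\<Sum>j | j<n \<and> E i j. y j)"
    and edges: "\<forall>i j. E i j \<longrightarrow> i < n \<and> j < n"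
    and connected: "\<forall>i<n. \<forall>j<n. E\<^sup>*\<^sup>* i j"
    and strict: "i0 < n" "(\<Sum>j | j<n \<and> E i0 j. w j) < \<phi> * w i0"
  shows "r < \<phi>"
proof (rule ccontr)
  assume "\<not> r < \<phi>"
  then have sub': "\<forall>i<n. \<phi> * y i \<le> (\<Sum>j | j<n \<and> E i j. y j)"
    using sub y_nonneg by (meson mult_right_mono not_less order_trans)
  obtain t p where t: "t > 0" and p: "p < n"
    and dominated: "\<forall>i<n. y i \<le> t * w i" and tight: "y p = t * w p"
    using max_ratio_vertex[OF w_pos y_nonneg p0] .
  have "y i = t * w i" if "E\<^sup>*\<^sup>* p i" for i
    using that
  proof (induction rule: rtranclp_induct)
    case (step a b)
    then show ?case
      using tight_vertex_propagates[OF super sub' dominated t] edges by blast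
  qed (use tight in simp)
  then have tight_all: "\<forall>i<n. y i = t * w i"
    using connected p by blast
  have "\<phi> * (t * w i0) \<le> (\<Sum>j | j<n \<and> E i0 j. y j)"
    using sub' tight_all strict(1) by metis
  also have "\<dots> = t * (\<Sum>j | j<n \<and> E i0 j. w j)"
    using tight_all by (simp add: sum_distrib_left)
  also have "\<dots> < t * (\<phi> * w i0)"
    using strict(2) t by simp
  finally show False
    by (simp add: algebra_simps)
qed

lemma adj_matrix_mult_vec:
  assumes i: "i < n" and v: "dim_vec v = n"
  shows "(adj_matrix n E *\<^sub>v v) $ i = (\<Sum>j | j < n \<and> E i j. v $ j)"
proof -
  have "(adj_matrix n E *\<^sub>v v) $ i = (\<Sum>j\<in>{0..<n}. if E i j then v $ j else 0)"
    using i v unfolding adj_matrix_def by (auto simp: scalar_prod_def intro!: sum.cong)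
  also have "\<dots> = (\<Sum>j\<in>{x\<in>{0..<n}. E i x}. v $ j)"
    by (rule sum.inter_filter[symmetric]) simp
  also have "{x\<in>{0..<n}. E i x} = {j. j < n \<and> E i j}"
    by auto
  finally show ?thesis .
qed

(* The moduli of an eigenvector for an eigenvalue of maximal modulus give a nonnegative
   sub-solution rho(A) y <= A y. *)
lemma spectral_radius_subinvariant_vector:
  assumes "n > 0"
  obtains y :: "nat \<Rightarrow> real" and p where "\<forall>i<n. y i \<ge> 0" "p < n" "y p > 0"
    "\<forall>i<n. spectral_radius (adj_matrix n E) * y i \<le> (\<Sum>j | j<n \<and> E i j. y j)"
proof -
  let ?A = "adj_matrix n E"
  have A: "?A \<in> carrier_mat n n"
    unfolding adj_matrix_def by simp
  obtain ev where ev: "ev \<in> spectrum ?A" "spectral_radius ?A = norm ev"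
    using spectral_radius_mem_max(1)[OF A assms] by auto
  obtain v where v: "v \<in> carrier_vec n" "v \<noteq> 0\<^sub>v n" "?A *\<^sub>v v = ev \<cdot>\<^sub>v v"
    using ev(1) A unfolding spectrum_def eigenvalue_def eigenvector_def by auto
  obtain p where p: "p < n" "v $ p \<noteq> 0"
    using v(1,2) by (metis carrier_vecD eq_vecI index_zero_vec(1,2))
  have "norm ev * norm (v $ i) \<le> (\<Sum>j | j<n \<and> E i j. norm (v $ j))" if i: "i < n" for i
  proof -
    have "ev * v $ i = (\<Sum>j | j < n \<and> E i j. v $ j)"
      using adj_matrix_mult_vec[OF i, of v E] v(1,3) i by (metis carrier_vecD index_smult_vec(1))
    then have "norm ev * norm (v $ i) = norm (\<Sum>j | j < n \<and> E i j. v $ j)"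
      by (metis norm_mult)
    also have "\<dots> \<le> (\<Sum>j | j<n \<and> E i j. norm (v $ j))"
      by (rule norm_sum)
    finally show ?thesis .
  qed
  then show thesis
    using that[of "\<lambda>i. norm (v $ i)" p] p ev(2) by simp
qed

lemma eigenvalue_le_spectral_radius:
  fixes x :: "nat \<Rightarrow> real"
  assumes eigen: "\<forall>i<n. (\<Sum>j | j<n \<and> E i j. x j) = \<mu> * x i"
    and p: "p < n" "x p \<noteq> 0"
  shows "\<bar>\<mu>\<bar> \<le> spectral_radius (adj_matrix n E)"
proof -
  let ?A = "adj_matrix n E"
  have A: "?A \<in> carrier_mat n n"
    unfolding adj_matrix_def by simp
  define v where "v = vec n (\<lambda>i. complex_of_real (x i))"
  have v_nonzero: "v \<noteq> 0\<^sub>v n"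
    using p unfolding v_def by (metis index_vec index_zero_vec(1) of_real_eq_0_iff)
  have "?A *\<^sub>v v = complex_of_real \<mu> \<cdot>\<^sub>v v"
  proof (rule eq_vecI)
    fix i assume "i < dim_vec (complex_of_real \<mu> \<cdot>\<^sub>v v)"
    then have i: "i < n"
      unfolding v_def by simp
    have "(?A *\<^sub>v v) $ i = complex_of_real (\<Sum>j | j<n \<and> E i j. x j)"
      using adj_matrix_mult_vec[OF i, of v E] unfolding v_def by simp
    then show "(?A *\<^sub>v v) $ i = (complex_of_real \<mu> \<cdot>\<^sub>v v) $ i"
      using eigen i unfolding v_def by simp
  qed (simp add: v_def adj_matrix_def)
  then have "complex_of_real \<mu> \<in> spectrum ?A"
    unfolding spectrum_def eigenvalue_def eigenvector_def using v_nonzero A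
    by (auto simp: v_def intro!: exI[of _ v])
  then show ?thesis
    using spectral_radius_mem_max(2)[OF A] p(1) by force
qed

locale connected_simple_graph =
  fixes n :: nat and E :: "nat \<Rightarrow> nat \<Rightarrow> bool"
  assumes simple: "simple_graph n E" and connected: "connected_graph n E" and two_le: "2 \<le> n"
begin

abbreviation nbrs :: "nat \<Rightarrow> nat set" where
  "nbrs i \<equiv> {j. j < n \<and> E i j}"

abbreviation d :: "nat \<Rightarrow> real" where
  "d i \<equiv> real (gdegree n E i)"

abbreviation m :: "nat \<Rightarrow> real" where
  "m \<equiv> avg_degree n E"

abbreviation N :: real where
  "N \<equiv> max_deg_ratio n E"

lemma edge_range: "E i j \<Longrightarrow> i < n \<and> j < n"
  and edge_sym: "E i j \<Longrightarrow> E j i"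
  and no_loop: "\<not> E i i"
  using simple unfolding simple_graph_def by auto

lemma d_eq_card: "d i = real (card (nbrs i))"
  unfolding gdegree_def by simp

(* Connectivity and n >= 2 rule out isolated vertices. *)
lemma d_pos: assumes i: "i < n" shows "d i > 0"
proof -
  define j where "j = (if i = 0 then 1 else 0 :: nat)"
  have j: "j < n" "j \<noteq> i"
    using two_le i unfolding j_def by auto
  have "E\<^sup>*\<^sup>* i j"
    using connected i j unfolding connected_graph_def by auto
  then obtain k where "E i k"
    using j(2) by (metis converse_rtranclpE)
  then have "k \<in> nbrs i"
    using edge_range by auto
  then show ?thesis
    unfolding d_eq_card by (auto simp: card_gt_0_iff)
qed

lemma d_times_m: assumes "i < n" shows "d i * m i = (\<Sum>j\<in>nbrs i. d j)"
  using d_pos[OF assms] unfolding avg_degree_def by simp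

lemma m_nonneg: "m i \<ge> 0"
  unfolding avg_degree_def by (simp add: sum_nonneg)

lemma d_le_N_d: assumes "E i j" shows "d j \<le> N * d i"
proof -
  let ?S = "{real (gdegree n E j) / real (gdegree n E i) | i j. i < n \<and> j < n \<and> E i j}"
  have "?S \<subseteq> (\<lambda>(i, j). d j / d i) ` ({..<n} \<times> {..<n})"
    by auto
  then have "finite ?S"
    by (rule finite_subset) auto
  moreover have "d j / d i \<in> ?S"
    using assms edge_range by blast
  ultimately have "d j / d i \<le> N"
    unfolding max_deg_ratio_def by simp
  then show ?thesis
    using d_pos edge_range[OF assms] by (simp add: field_simps)
qed

(* Applying the ratio bound to both orientations of an edge. *)
lemma N_ge_1: "N \<ge> 1"
proof -
  obtain k where k: "E 0 k"
    using d_pos[of 0] two_le unfolding d_eq_card by (fastforce simp: card_gt_0_iff)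
  have bounds: "d k \<le> N * d 0" "d 0 \<le> N * d k"
    using d_le_N_d k edge_sym by blast+
  have positive: "d 0 > 0" "d k > 0"
    using d_pos edge_range[OF k] by auto
  show ?thesis
  proof (rule ccontr)
    assume "\<not> 1 \<le> N"
    then have "N * d 0 < d 0" "N * d k < d k"
      using positive by simp_all
    then show False
      using bounds by linarith
  qed
qed

(* A vertex j with d_j = N d_i for every other vertex i has the smallest average degree:
   every vertex has degree at least d_j / N, and all neighbours of j have exactly that. *)
lemma dominating_vertex_min_avg:
  assumes j: "j < n" and dominating: "\<forall>i<n. i \<noteq> j \<longrightarrow> d j = N * d i"
    and k: "k < n"
  shows "m j \<le> m k"
proof -
  have other: "d i = d j / N" if "i < n" "i \<noteq> j" for i
    using dominating that N_ge_1 by auto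
  have "d j * m j = (\<Sum>i\<in>nbrs j. d j / N)"
    unfolding d_times_m[OF j] using other no_loop by (intro sum.cong) blast+
  also have "\<dots> = d j * (d j / N)"
    using d_eq_card[of j] by simp
  finally have m_j: "m j = d j / N"
    using d_pos[OF j] by (metis mult_left_cancel less_irrefl)
  have "d k * (d j / N) = (\<Sum>i\<in>nbrs k. d j / N)"
    using d_eq_card[of k] by simp
  also have "\<dots> \<le> (\<Sum>i\<in>nbrs k. d i)"
  proof (rule sum_mono)
    fix i assume i: "i \<in> nbrs k"
    show "d j / N \<le> d i"
    proof (cases "i = j")
      case True
      then show ?thesis
        using N_ge_1 d_pos[OF j] by (simp add: divide_le_eq)
    qed (use other i in simp)
  qed
  also have "\<dots> = d k * m k"
    using d_times_m[OF k] by simp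
  finally have "d k * (d j / N) \<le> d k * m k" .
  then show ?thesis
    using m_j d_pos[OF k] mult_le_cancel_left_pos by metis
qed

end

locale sorted_avg_degrees = connected_simple_graph +
  fixes l :: nat
  assumes sorted: "\<forall>i j. i \<le> j \<and> j < n \<longrightarrow> m j \<le> m i" and l_lt: "l < n"
begin

definition excess :: real where
  "excess = (\<Sum>k<l. m k - m l)"

definition \<phi> :: real where
  "\<phi> = (m l - N + sqrt ((m l + N)\<^sup>2 + 4 * N * excess)) / 2"

definition c :: "nat \<Rightarrow> real" where
  "c k = (if k < l then (m k - m l) / (\<phi> + N) else 0)"

definition w :: "nat \<Rightarrow> real" where
  "w k = d k * (1 + c k)"

lemma m_antimono: "k \<le> j \<Longrightarrow> j < n \<Longrightarrow> m j \<le> m k"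
  using sorted by blast

lemma excess_nonneg: "excess \<ge> 0"
  unfolding excess_def using m_antimono l_lt by (intro sum_nonneg) auto

lemma \<phi>_root: "(\<phi> + N) * (\<phi> - m l) = N * excess"
  and \<phi>_plus_N_pos: "\<phi> + N > 0"
proof -
  define q where "q = sqrt ((m l + N)\<^sup>2 + 4 * N * excess)"
  have \<phi>_q: "\<phi> = (m l - N + q) / 2"
    unfolding \<phi>_def q_def ..
  have q_sq: "q\<^sup>2 = (m l + N)\<^sup>2 + 4 * N * excess"
    unfolding q_def using N_ge_1 excess_nonneg by simp
  have "sqrt ((m l + N)\<^sup>2) \<le> q"
    unfolding q_def using N_ge_1 excess_nonneg by (intro real_sqrt_le_mono) simp
  then have q_ge: "q \<ge> m l + N"
    using m_nonneg[of l] N_ge_1 by simp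
  have "(\<phi> + N) * (\<phi> - m l) = (q\<^sup>2 - (m l + N)\<^sup>2) / 4"
    unfolding \<phi>_q by (simp add: field_simps power2_eq_square)
  then show "(\<phi> + N) * (\<phi> - m l) = N * excess"
    using q_sq by simp
  show "\<phi> + N > 0"
    using \<phi>_q q_ge m_nonneg[of l] N_ge_1 by simp
qed

lemma c_nonneg: "c k \<ge> 0"
  unfolding c_def using m_antimono[of k l] l_lt \<phi>_plus_N_pos by auto

lemma c_pos: "k < l \<Longrightarrow> m k > m l \<Longrightarrow> c k > 0"
  unfolding c_def using \<phi>_plus_N_pos by simp

lemma w_pos: "i < n \<Longrightarrow> w i > 0"
  unfolding w_def using d_pos c_nonneg by (simp add: add_pos_nonneg)

lemma N_times_c_total: "N * (\<Sum>k<n. c k) = \<phi> - m l"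
proof -
  have "(\<Sum>k<n. c k) = (\<Sum>k<l. (m k - m l) / (\<phi> + N))"
    using l_lt by (intro sum.mono_neutral_cong_right) (auto simp: c_def)
  also have "\<dots> = excess / (\<phi> + N)"
    unfolding excess_def by (simp add: sum_divide_distrib)
  finally have "(\<phi> + N) * (N * (\<Sum>k<n. c k)) = (\<phi> + N) * (\<phi> - m l)"
    using \<phi>_root \<phi>_plus_N_pos by simp
  then show ?thesis
    using \<phi>_plus_N_pos by simp
qed

(* Vertices before l have c chosen exactly, later ones have m_i <= m_l. *)
lemma slack_nonneg: "i < n \<Longrightarrow> (\<phi> + N) * c i - (m i - m l) \<ge> 0"
  using \<phi>_plus_N_pos m_antimono[of l i] unfolding c_def by (cases "i < l") auto

lemma row_gap:
  assumes i: "i < n"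
  shows "\<phi> * w i - (\<Sum>j\<in>nbrs i. w j) =
    d i * ((\<phi> + N) * c i - (m i - m l))
    + N * d i * (\<Sum>k\<in>{..<n} - insert i (nbrs i). c k)
    + (\<Sum>j\<in>nbrs i. (N * d i - d j) * c j)"
proof -
  have nbr_sum: "(\<Sum>j\<in>nbrs i. w j) = d i * m i + (\<Sum>j\<in>nbrs i. d j * c j)"
    unfolding w_def d_times_m[OF i] by (simp add: algebra_simps sum.distrib)
  have "insert i (nbrs i) \<subseteq> {..<n}"
    using i by auto
  then have "(\<Sum>k<n. c k) = (\<Sum>k\<in>{..<n} - insert i (nbrs i). c k) + (\<Sum>k\<in>insert i (nbrs i). c k)"
    by (simp add: sum.subset_diff)
  also have "(\<Sum>k\<in>insert i (nbrs i). c k) = c i + (\<Sum>k\<in>nbrs i. c k)"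
    using no_loop by simp
  finally have "N * (\<Sum>k\<in>{..<n} - insert i (nbrs i). c k)
      = (\<phi> - m l) - N * c i - N * (\<Sum>k\<in>nbrs i. c k)"
    using N_times_c_total by (simp add: algebra_simps)
  then have "d i * (N * (\<Sum>k\<in>{..<n} - insert i (nbrs i). c k))
      = d i * ((\<phi> - m l) - N * c i - N * (\<Sum>k\<in>nbrs i. c k))"
    by (rule arg_cong)
  then have "N * d i * (\<Sum>k\<in>{..<n} - insert i (nbrs i). c k)
      = d i * (\<phi> - m l) - N * d i * c i - N * d i * (\<Sum>k\<in>nbrs i. c k)"
    by (simp add: algebra_simps)
  moreover have "(\<Sum>j\<in>nbrs i. (N * d i - d j) * c j)
      = N * d i * (\<Sum>j\<in>nbrs i. c j) - (\<Sum>j\<in>nbrs i. d j * c j)"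
    by (simp add: algebra_simps sum_subtractf sum_distrib_left)
  ultimately show ?thesis
    unfolding nbr_sum by (simp add: w_def algebra_simps)
qed

lemma gap_terms_nonneg:
  assumes i: "i < n"
  shows "d i * ((\<phi> + N) * c i - (m i - m l)) \<ge> 0"
    and "N * d i * (\<Sum>k\<in>{..<n} - insert i (nbrs i). c k) \<ge> 0"
    and "(\<Sum>j\<in>nbrs i. (N * d i - d j) * c j) \<ge> 0"
  using slack_nonneg[OF i] d_pos[OF i] N_ge_1 c_nonneg d_le_N_d
  by (auto intro!: sum_nonneg mult_nonneg_nonneg)

lemma w_superharmonic: "i < n \<Longrightarrow> (\<Sum>j\<in>nbrs i. w j) \<le> \<phi> * w i"
  using row_gap gap_terms_nonneg by fastforce

lemma strict_row_slack:
  assumes i: "i < n" and "(\<phi> + N) * c i > m i - m l"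
  shows "(\<Sum>j\<in>nbrs i. w j) < \<phi> * w i"
proof -
  have "d i * ((\<phi> + N) * c i - (m i - m l)) > 0"
    using assms d_pos[OF i] by simp
  then show ?thesis
    using row_gap[OF i] gap_terms_nonneg[OF i] by linarith
qed

lemma strict_row_nonneighbour:
  assumes i: "i < n" and j: "j < n" "j \<noteq> i" "\<not> E i j" "c j > 0"
  shows "(\<Sum>j\<in>nbrs i. w j) < \<phi> * w i"
proof -
  have "(\<Sum>k\<in>{..<n} - insert i (nbrs i). c k) > 0"
    using j c_nonneg by (intro sum_pos2[of _ j]) auto
  then have "N * d i * (\<Sum>k\<in>{..<n} - insert i (nbrs i). c k) > 0"
    using N_ge_1 d_pos[OF i] by simp
  then show ?thesis
    using row_gap[OF i] gap_terms_nonneg[OF i] by linarith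
qed

lemma strict_row_degree:
  assumes edge: "E i j" and "d j < N * d i" "c j > 0"
  shows "(\<Sum>j\<in>nbrs i. w j) < \<phi> * w i"
proof -
  have i: "i < n"
    using edge_range[OF edge] by simp
  have "(\<Sum>j\<in>nbrs i. (N * d i - d j) * c j) > 0"
    using assms edge_range[OF edge] c_nonneg d_le_N_d
    by (intro sum_pos2[of _ j]) (auto intro!: mult_nonneg_nonneg)
  then show ?thesis
    using row_gap[OF i] gap_terms_nonneg[OF i] by linarith
qed

(* Without pseudo-regularity some row is strict: either some m_j > m_l with j < l, and then
   j has a non-neighbour, a neighbour of smaller degree ratio, or dominates the graph
   (impossible as m_j > m_l); or m is constant before l and some later m_a < m_l. *)
lemma w_strict_row:
  assumes not_pseudo_regular: "\<not> (\<forall>j<n. \<forall>k<n. m j = m k)"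
  shows "\<exists>i<n. (\<Sum>j\<in>nbrs i. w j) < \<phi> * w i"
proof (cases "\<exists>j<l. m j > m l")
  case True
  then obtain j where j: "j < l" "m j > m l"
    by blast
  have j_lt: "j < n" and c_j: "c j > 0"
    using j l_lt c_pos by auto
  consider (nonadjacent) i where "i < n" "i \<noteq> j" "\<not> E i j"
    | (low_degree) i where "E i j" "d j < N * d i"
    | (dominating) "\<forall>i<n. i \<noteq> j \<longrightarrow> d j = N * d i"
    using d_le_N_d edge_sym by (meson antisym_conv1)
  then show ?thesis
  proof cases
    case (nonadjacent i)
    then show ?thesis
      using strict_row_nonneighbour[OF _ j_lt _ _ c_j] by blast
  next
    case (low_degree i)
    then show ?thesis
      using strict_row_degree[OF _ _ c_j] edge_range by blast
  next
    case dominating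
    then show ?thesis
      using dominating_vertex_min_avg[OF j_lt _ l_lt] j(2) by simp
  qed
next
  case False
  then have head_equal: "m k = m l" if "k < l" for k
    using that m_antimono[of k l] l_lt by force
  obtain a where a: "a < n" "m a \<noteq> m l"
  proof -
    obtain j k where "j < n" "k < n" "m j \<noteq> m k"
      using not_pseudo_regular by blast
    then show thesis
      using that by (cases "m j = m l") auto
  qed
  have a_tail: "\<not> a < l"
    using head_equal a(2) by blast
  then have "m a < m l"
    using m_antimono[of l a] a by linarith
  then have "(\<phi> + N) * c a > m a - m l"
    using a_tail unfolding c_def by simp
  then show ?thesis
    using strict_row_slack a(1) by blast
qed

lemma n_pos: "0 < n"
  using l_lt by simp

lemma spectral_radius_le_\<phi>: "spectral_radius (adj_matrix n E) \<le> \<phi>"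
proof -
  obtain y p where y: "\<forall>i<n. y i \<ge> 0" "p < n" "y p > 0"
    "\<forall>i<n. spectral_radius (adj_matrix n E) * y i \<le> (\<Sum>j | j<n \<and> E i j. y j)"
    by (rule spectral_radius_subinvariant_vector[OF n_pos])
  show ?thesis
    by (rule subinvariant_le_superinvariant[OF _ _ y]) (use w_pos w_superharmonic in auto)
qed

lemma spectral_radius_lt_\<phi>:
  assumes "\<not> (\<forall>j<n. \<forall>k<n. m j = m k)"
  shows "spectral_radius (adj_matrix n E) < \<phi>"
proof -
  obtain y p where y: "\<forall>i<n. y i \<ge> 0" "p < n" "y p > 0"
    "\<forall>i<n. spectral_radius (adj_matrix n E) * y i \<le> (\<Sum>j | j<n \<and> E i j. y j)"
    by (rule spectral_radius_subinvariant_vector[OF n_pos])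
  obtain i0 where i0: "i0 < n" "(\<Sum>j\<in>nbrs i0. w j) < \<phi> * w i0"
    using w_strict_row[OF assms] by blast
  have reach: "\<forall>i<n. \<forall>j<n. E\<^sup>*\<^sup>* i j"
    using connected unfolding connected_graph_def .
  show ?thesis
    by (rule subinvariant_lt_superinvariant[OF _ _ y _ reach i0])
      (use w_pos w_superharmonic edge_range in auto)
qed

(* For pseudo-regular graphs phi = m_l, and the degree vector is an eigenvector for m_l. *)
lemma pseudo_regular_spectral_radius:
  assumes pseudo_regular: "\<forall>j<n. \<forall>k<n. m j = m k"
  shows "spectral_radius (adj_matrix n E) = \<phi>"
proof -
  have m_const: "m k = m l" if "k < n" for k
    using pseudo_regular that l_lt by blast
  have "excess = 0"
    unfolding excess_def
  proof (intro sum.neutral ballI)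
    fix k assume "k \<in> {..<l}"
    then show "m k - m l = 0"
      using m_const[of k] l_lt by simp
  qed
  then have "\<phi> = m l"
    unfolding \<phi>_def using m_nonneg[of l] N_ge_1 by simp
  moreover have "\<bar>m l\<bar> \<le> spectral_radius (adj_matrix n E)"
  proof (rule eigenvalue_le_spectral_radius)
    show "\<forall>i<n. (\<Sum>j | j<n \<and> E i j. d j) = m l * d i"
    proof (intro allI impI)
      fix i assume "i < n"
      then show "(\<Sum>j | j<n \<and> E i j. d j) = m l * d i"
        using d_times_m[of i] m_const[of i] by (simp add: mult.commute)
    qed
    show "0 < n" "d 0 \<noteq> 0"
      using d_pos[OF n_pos] n_pos by simp_all
  qed
  ultimately show ?thesis
    using spectral_radius_le_\<phi> m_nonneg[of l] by simp
qed

end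

theorem corollary4:
  fixes n :: nat and E :: "nat \<Rightarrow> nat \<Rightarrow> bool"
  assumes "simple_graph n E" and "connected_graph n E" and "n \<ge> 2"
    and "\<forall>i j. i \<le> j \<and> j < n \<longrightarrow> avg_degree n E j \<le> avg_degree n E i"
  shows "\<forall>i<n.
    (let m = avg_degree n E; N = max_deg_ratio n E;
         b = (m i - N + sqrt ((m i + N)\<^sup>2 + 4 * N * (\<Sum>k<i. m k - m i))) / 2
     in spectral_radius (adj_matrix n E) \<le> b \<and>
        (spectral_radius (adj_matrix n E) = b \<longleftrightarrow> (\<forall>j<n. \<forall>k<n. m j = m k)))"
proof (intro allI impI)
  fix i assume "i < n"
  then interpret sorted_avg_degrees n E i
    using assms by unfold_locales auto
  show "let m = avg_degree n E; N = max_deg_ratio n E;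
      b = (m i - N + sqrt ((m i + N)\<^sup>2 + 4 * N * (\<Sum>k<i. m k - m i))) / 2
    in spectral_radius (adj_matrix n E) \<le> b \<and>
      (spectral_radius (adj_matrix n E) = b \<longleftrightarrow> (\<forall>j<n. \<forall>k<n. m j = m k))"
    unfolding Let_def excess_def[symmetric] \<phi>_def[symmetric]
    using spectral_radius_le_\<phi> spectral_radius_lt_\<phi> pseudo_regular_spectral_radius
    by (metis less_irrefl)
qed

end
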